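(* Let $\lambda\in X^+$ be a $p$-core. Let $\alpha=\varepsilon_i-\varepsilon_j$ with $1\le i<j\le m$, and suppose $\langle\lambda+\rho,\alpha^\vee\rangle=a+lp$ with integers $a,l>0$. Then $\chi(s_{\alpha,l}\cdot\lambda)=0$.
   Context: Setup: $p>2$ is a prime, $m\ge1$, weight lattice $X=\mathbb Z^m$ of $\mathrm{Sp}_{2m}$ with standard basis $\varepsilon_i$, standard inner product, $\alpha^\vee=2\alpha/\langle\alpha,\alpha\rangle$. $X^+=\{\lambda\in\mathbb Z^m:\lambda_1\ge\dots\ge\lambda_m\ge0\}$. $\rho=(m,m-1,\dots,1)$. $s_{\alpha,l}(x)=x-(\langle x,\alpha^\vee\rangle-lp)\alpha$, $w\cdot x=w(x+\rho)-\rho$. For $\mu\in X$, $\chi(\mu)$ is the Weyl character of type $C_m$; $\chi(\mu)=0$ iff some entry of $\mu+\rho$ is $0$ or two entries of $\mu+\rho$ are equal up to sign. A $p$-core is $\lambda\in X^+$ such that for all $i$ and all integers $l\ge1$ with $(\lambda+\rho)_i-lp>0$, the number $(\lambda+\rho)_i-lp$ occurs as an entry of $\lambda+\rho$. *)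

theory Defs
  imports "HOL-Combinatorics.Permutations" "HOL-Computational_Algebra.Primes"
begin

text \<open>Weights of Sp_{2m}: X = Z^m, represented as functions nat => int that vanish
  outside the index set {1..m}.\<close>

definition wts :: "nat \<Rightarrow> (nat \<Rightarrow> int) set" where
  "wts m = {x. \<forall>k. k \<notin> {1..m} \<longrightarrow> x k = 0}"

definition addv :: "(nat \<Rightarrow> int) \<Rightarrow> (nat \<Rightarrow> int) \<Rightarrow> nat \<Rightarrow> int" where
  "addv x y = (\<lambda>k. x k + y k)"

definition subv :: "(nat \<Rightarrow> int) \<Rightarrow> (nat \<Rightarrow> int) \<Rightarrow> nat \<Rightarrow> int" where
  "subv x y = (\<lambda>k. x k - y k)"

definition eps :: "nat \<Rightarrow> nat \<Rightarrow> int" where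
  "eps i = (\<lambda>k. if k = i then 1 else 0)"

definition inner_w :: "nat \<Rightarrow> (nat \<Rightarrow> int) \<Rightarrow> (nat \<Rightarrow> int) \<Rightarrow> int" where
  "inner_w m x y = (\<Sum>k\<in>{1..m}. x k * y k)"

text \<open>pairing with the coroot: <x, alpha^vee> = 2<x,alpha>/<alpha,alpha>
  (an integer for roots alpha and weights x)\<close>
definition coroot_pair :: "nat \<Rightarrow> (nat \<Rightarrow> int) \<Rightarrow> (nat \<Rightarrow> int) \<Rightarrow> int" where
  "coroot_pair m x \<alpha> = (2 * inner_w m x \<alpha>) div inner_w m \<alpha> \<alpha>"

definition rho :: "nat \<Rightarrow> nat \<Rightarrow> int" where
  "rho m = (\<lambda>k. if 1 \<le> k \<and> k \<le> m then int (m - k + 1) else 0)"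

definition s_aff :: "nat \<Rightarrow> nat \<Rightarrow> (nat \<Rightarrow> int) \<Rightarrow> int \<Rightarrow> (nat \<Rightarrow> int) \<Rightarrow> nat \<Rightarrow> int" where
  "s_aff p m \<alpha> l x = (\<lambda>k. x k - (coroot_pair m x \<alpha> - l * int p) * \<alpha> k)"

definition dot :: "nat \<Rightarrow> ((nat \<Rightarrow> int) \<Rightarrow> (nat \<Rightarrow> int)) \<Rightarrow> (nat \<Rightarrow> int) \<Rightarrow> nat \<Rightarrow> int" where
  "dot m w x = subv (w (addv x (rho m))) (rho m)"

definition dominant :: "nat \<Rightarrow> (nat \<Rightarrow> int) \<Rightarrow> bool" where
  "dominant m x \<longleftrightarrow> x \<in> wts m \<and> (\<forall>i j. 1 \<le> i \<and> i \<le> j \<and> j \<le> m \<longrightarrow> x j \<le> x i)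
     \<and> (\<forall>k\<in>{1..m}. 0 \<le> x k)"

definition p_core :: "nat \<Rightarrow> nat \<Rightarrow> (nat \<Rightarrow> int) \<Rightarrow> bool" where
  "p_core p m lam \<longleftrightarrow> dominant m lam \<and>
     (\<forall>i\<in>{1..m}. \<forall>l::int. l \<ge> 1 \<longrightarrow> addv lam (rho m) i - l * int p > 0 \<longrightarrow>
        (\<exists>j\<in>{1..m}. addv lam (rho m) j = addv lam (rho m) i - l * int p))"

text \<open>Weyl group of type C_m: signed permutations (sigma, e) of {1..m}.\<close>
definition weyl :: "nat \<Rightarrow> ((nat \<Rightarrow> nat) \<times> (nat \<Rightarrow> int)) set" where
  "weyl m = {(\<sigma>, e). \<sigma> permutes {1..m} \<and> (\<forall>k. e k = 1 \<or> e k = -1)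
                       \<and> (\<forall>k. k \<notin> {1..m} \<longrightarrow> e k = 1)}"

definition wact :: "(nat \<Rightarrow> nat) \<times> (nat \<Rightarrow> int) \<Rightarrow> (nat \<Rightarrow> int) \<Rightarrow> nat \<Rightarrow> int" where
  "wact w x = (\<lambda>k. snd w k * x (fst w k))"

definition wsgn :: "nat \<Rightarrow> (nat \<Rightarrow> nat) \<times> (nat \<Rightarrow> int) \<Rightarrow> int" where
  "wsgn m w = sign (fst w) * (\<Prod>k\<in>{1..m}. snd w k)"

text \<open>Elements of the group ring Z[X]: finitely supported functions X => int.\<close>
definition grp_ring :: "nat \<Rightarrow> ((nat \<Rightarrow> int) \<Rightarrow> int) set" where
  "grp_ring m = {f. finite {x. f x \<noteq> 0} \<and> {x. f x \<noteq> 0} \<subseteq> wts m}"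

definition gmult :: "((nat \<Rightarrow> int) \<Rightarrow> int) \<Rightarrow> ((nat \<Rightarrow> int) \<Rightarrow> int) \<Rightarrow> (nat \<Rightarrow> int) \<Rightarrow> int" where
  "gmult f g = (\<lambda>x. \<Sum>y\<in>{y. f y \<noteq> 0}. f y * g (subv x y))"

definition altsum :: "nat \<Rightarrow> (nat \<Rightarrow> int) \<Rightarrow> (nat \<Rightarrow> int) \<Rightarrow> int" where
  "altsum m \<nu> = (\<lambda>x. \<Sum>w\<in>{w\<in>weyl m. wact w \<nu> = x}. wsgn m w)"

text \<open>Weyl character chi(mu) = A(mu + rho) / A(rho) (Weyl character formula),
  the unique element of Z[X] with chi(mu) * A(rho) = A(mu + rho).\<close>
definition weyl_char :: "nat \<Rightarrow> (nat \<Rightarrow> int) \<Rightarrow> (nat \<Rightarrow> int) \<Rightarrow> int" where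
  "weyl_char m \<mu> = (THE c. c \<in> grp_ring m \<and>
      gmult c (altsum m (rho m)) = altsum m (addv \<mu> (rho m)))"

end

theory Submission
  imports Defs
begin

text \<open>Put \<open>\<nu> = \<lambda> + \<rho>\<close>, so \<open>\<nu>\<^sub>i - \<nu>\<^sub>j = a + lp\<close>. Since \<open>\<nu>\<^sub>j \<ge> 1\<close>, the entry \<open>\<nu>\<^sub>i - lp\<close> is positive,
  hence by the \<open>p\<close>-core property it equals some entry \<open>\<nu>\<^sub>k\<close>, with \<open>k \<noteq> i, j\<close>.
  Now \<open>s\<^sub>\<alpha>\<^sub>,\<^sub>l \<cdot> \<lambda> + \<rho> = \<nu> - a\<alpha>\<close>, whose \<open>j\<close>-th entry \<open>\<nu>\<^sub>j + a = \<nu>\<^sub>i - lp\<close> equals its \<open>k\<close>-th entry.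
  A weight with two equal entries has vanishing alternating sum (the transposition of the two
  positions is an odd symmetry), and multiplication by \<open>A(\<rho>)\<close> is injective on \<open>\<int>[X]\<close>
  (compare coefficients at the top of the support with respect to \<open>\<langle>\<rho>, -\<rangle>\<close>), so the Weyl
  character vanishes.\<close>

lemma sum_times_eps: "(\<Sum>k\<in>{1..m}. x k * eps i k) = (if i \<in> {1..m} then x i else 0)"
proof -
  have "(\<Sum>k\<in>{1..m}. x k * eps i k) = (\<Sum>k\<in>{1..m}. if k = i then x k else 0)"
    by (rule sum.cong) (auto simp: eps_def)
  thus ?thesis by simp
qed

lemma inner_w_eps_diff:
  assumes "i \<in> {1..m}" "j \<in> {1..m}"
  shows "inner_w m x (subv (eps i) (eps j)) = x i - x j"
  using assms unfolding inner_w_def subv_def right_diff_distrib sum_subtractf sum_times_eps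
  by simp

lemma coroot_pair_eps_diff:
  assumes "i \<in> {1..m}" "j \<in> {1..m}" "i \<noteq> j"
  shows "coroot_pair m x (subv (eps i) (eps j)) = x i - x j"
  using assms unfolding coroot_pair_def inner_w_eps_diff[OF assms(1,2)]
  by (simp add: subv_def eps_def)

lemma inner_w_addv: "inner_w m z (addv x y) = inner_w m z x + inner_w m z y"
  unfolding inner_w_def addv_def by (simp add: distrib_left sum.distrib)

lemma inner_w_subv: "inner_w m z (subv x y) = inner_w m z x - inner_w m z y"
  unfolding inner_w_def subv_def by (simp add: right_diff_distrib sum_subtractf)

lemma addv_dot_rho: "addv (dot m w x) (rho m) = w (addv x (rho m))"
  by (simp add: dot_def addv_def subv_def)

lemma rho_pos: "k \<in> {1..m} \<Longrightarrow> rho m k > 0"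
  by (simp add: rho_def)

lemma rho_inj: "k \<in> {1..m} \<Longrightarrow> k' \<in> {1..m} \<Longrightarrow> rho m k = rho m k' \<Longrightarrow> k = k'"
  by (auto simp: rho_def)

lemma rho_in_wts: "rho m \<in> wts m"
  by (simp add: wts_def rho_def)

lemma weylE:
  assumes "w \<in> weyl m"
  obtains \<sigma> e where "w = (\<sigma>, e)" "\<sigma> permutes {1..m}" "\<And>k. e k = 1 \<or> e k = -1"
    "\<And>k. k \<notin> {1..m} \<Longrightarrow> e k = 1"
  using assms unfolding weyl_def by auto

lemma wact_outside:
  assumes "w \<in> weyl m" "k \<notin> {1..m}"
  shows "wact w x k = x k"
  using assms by (elim weylE) (simp add: wact_def permutes_not_in)

lemma sum_square_wact:
  assumes "w \<in> weyl m"
  shows "(\<Sum>k\<in>{1..m}. (wact w x k)\<^sup>2) = (\<Sum>k\<in>{1..m}. (x k)\<^sup>2)"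
proof -
  obtain \<sigma> e where w: "w = (\<sigma>, e)" "\<sigma> permutes {1..m}" "\<And>k. e k = 1 \<or> e k = -1"
    using assms by (elim weylE) blast
  have "(wact w x k)\<^sup>2 = (x (\<sigma> k))\<^sup>2" for k
    using w(3)[of k] by (auto simp: wact_def w(1))
  hence "(\<Sum>k\<in>{1..m}. (wact w x k)\<^sup>2) = (\<Sum>k\<in>{1..m}. (x (\<sigma> k))\<^sup>2)"
    by simp
  also have "\<dots> = (\<Sum>k\<in>{1..m}. (x k)\<^sup>2)"
    using sum.reindex_bij_betw[OF permutes_imp_bij[OF w(2)], of "\<lambda>k. (x k)\<^sup>2"] by simp
  finally show ?thesis .
qed

lemma inner_w_wact_defect:
  assumes "w \<in> weyl m"
  shows "2 * (inner_w m x x - inner_w m x (wact w x)) = (\<Sum>k\<in>{1..m}. (x k - wact w x k)\<^sup>2)"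
proof -
  have "(\<Sum>k\<in>{1..m}. (x k - wact w x k)\<^sup>2) =
      (\<Sum>k\<in>{1..m}. (x k)\<^sup>2) + (\<Sum>k\<in>{1..m}. (wact w x k)\<^sup>2) - 2 * (\<Sum>k\<in>{1..m}. x k * wact w x k)"
    by (simp add: power2_diff sum.distrib sum_subtractf sum_distrib_left algebra_simps)
  thus ?thesis
    using sum_square_wact[OF assms] unfolding inner_w_def by (simp add: power2_eq_square)
qed

lemma inner_w_wact_le:
  assumes "w \<in> weyl m"
  shows "inner_w m x (wact w x) \<le> inner_w m x x"
  using inner_w_wact_defect[OF assms, of x] sum_nonneg[of "{1..m}" "\<lambda>k. (x k - wact w x k)\<^sup>2"]
  by simp

lemma inner_w_wact_eq_imp_fixed:
  assumes "w \<in> weyl m" "x \<in> wts m" "inner_w m x (wact w x) = inner_w m x x"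
  shows "wact w x = x"
proof
  fix k
  show "wact w x k = x k"
  proof (cases "k \<in> {1..m}")
    case True
    have "(\<Sum>k\<in>{1..m}. (x k - wact w x k)\<^sup>2) = 0"
      using inner_w_wact_defect[OF assms(1), of x] assms(3) by simp
    then have "(x k - wact w x k)\<^sup>2 = 0"
      using True by (subst (asm) sum_nonneg_eq_0_iff) auto
    thus ?thesis by simp
  next
    case False
    thus ?thesis using wact_outside[OF assms(1)] by simp
  qed
qed

lemma weyl_fixing_rho:
  assumes "w \<in> weyl m" "wact w (rho m) = rho m"
  shows "w = (id, \<lambda>_. 1)"
proof -
  obtain \<sigma> e where w: "w = (\<sigma>, e)" "\<sigma> permutes {1..m}" "\<And>k. e k = 1 \<or> e k = -1"
    "\<And>k. k \<notin> {1..m} \<Longrightarrow> e k = 1"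
    using assms(1) by (elim weylE) blast
  have "\<sigma> k = k \<and> e k = 1" for k
  proof (cases "k \<in> {1..m}")
    case True
    have \<sigma>k: "\<sigma> k \<in> {1..m}" using permutes_in_image[OF w(2)] True by simp
    have eq: "e k * rho m (\<sigma> k) = rho m k"
      using fun_cong[OF assms(2), of k] by (simp add: wact_def w(1))
    have "e k = 1"
      using w(3)[of k] eq rho_pos[OF \<sigma>k] rho_pos[OF True] by auto
    thus ?thesis using eq rho_inj[OF \<sigma>k True] by simp
  next
    case False
    thus ?thesis using w(2,4) by (simp add: permutes_not_in)
  qed
  thus ?thesis using w(1) by auto
qed

lemma altsum_rho_at_rho: "altsum m (rho m) (rho m) = 1"
proof -
  have "{w\<in>weyl m. wact w (rho m) = rho m} = {(id, \<lambda>_. 1)}"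
    using weyl_fixing_rho by (auto simp: weyl_def wact_def permutes_id)
  thus ?thesis by (simp add: altsum_def wsgn_def)
qed

lemma altsum_nonzero_imp_orbit:
  assumes "altsum m \<nu> x \<noteq> 0"
  obtains w where "w \<in> weyl m" "wact w \<nu> = x"
proof -
  have "{w\<in>weyl m. wact w \<nu> = x} \<noteq> {}"
    using assms unfolding altsum_def by (metis sum.empty)
  thus ?thesis using that by blast
qed

text \<open>If \<open>y\<^sub>0\<close> maximises \<open>\<langle>\<rho>, -\<rangle>\<close> on the support of \<open>c\<close>, then \<open>y\<^sub>0 + \<rho>\<close> arises in \<open>c \<cdot> A(\<rho>)\<close> only
  as \<open>y\<^sub>0 + \<rho>\<close>: every \<open>w\<rho>\<close> satisfies \<open>\<langle>\<rho>, w\<rho>\<rangle> \<le> \<langle>\<rho>, \<rho>\<rangle>\<close>, with equality only for \<open>w\<rho> = \<rho>\<close>.\<close>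

lemma gmult_altsum_rho_at_top:
  assumes "finite {y. c y \<noteq> 0}" and "c y\<^sub>0 \<noteq> 0"
    and top: "\<And>y. c y \<noteq> 0 \<Longrightarrow> inner_w m (rho m) y \<le> inner_w m (rho m) y\<^sub>0"
  shows "gmult c (altsum m (rho m)) (addv y\<^sub>0 (rho m)) = c y\<^sub>0"
proof -
  define S where "S = {y. c y \<noteq> 0}"
  define x where "x = addv y\<^sub>0 (rho m)"
  define \<phi> where "\<phi> = inner_w m (rho m)"
  have xy\<^sub>0: "subv x y\<^sub>0 = rho m" by (auto simp: x_def subv_def addv_def)
  have other: "c y * altsum m (rho m) (subv x y) = 0" if "y \<in> S" "y \<noteq> y\<^sub>0" for y
  proof (rule ccontr)
    assume "c y * altsum m (rho m) (subv x y) \<noteq> 0"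
    then obtain w where w: "w \<in> weyl m" "wact w (rho m) = subv x y"
      by (auto elim: altsum_nonzero_imp_orbit)
    have "\<phi> (subv x y) = \<phi> y\<^sub>0 + \<phi> (rho m) - \<phi> y"
      unfolding \<phi>_def x_def inner_w_subv inner_w_addv by simp
    moreover have "\<phi> (subv x y) \<le> \<phi> (rho m)"
      using inner_w_wact_le[OF w(1), of "rho m"] w(2) by (simp add: \<phi>_def)
    moreover have "\<phi> y \<le> \<phi> y\<^sub>0" using top that(1) by (simp add: S_def \<phi>_def)
    ultimately have "inner_w m (rho m) (wact w (rho m)) = inner_w m (rho m) (rho m)"
      using w(2) by (simp add: \<phi>_def)
    hence xy: "subv x y = rho m"
      using inner_w_wact_eq_imp_fixed[OF w(1) rho_in_wts] w(2) by simp
    have "y k = y\<^sub>0 k" for k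
      using fun_cong[OF xy, of k] fun_cong[OF xy\<^sub>0, of k] by (simp add: subv_def)
    hence "y = y\<^sub>0" ..
    thus False using that(2) by simp
  qed
  have "gmult c (altsum m (rho m)) x = (\<Sum>y\<in>S. c y * altsum m (rho m) (subv x y))"
    by (simp add: gmult_def S_def)
  also have "\<dots> = c y\<^sub>0 * altsum m (rho m) (subv x y\<^sub>0)"
    using assms(1,2) other by (subst sum.mono_neutral_right[of S "{y\<^sub>0}"]) (auto simp: S_def)
  also have "\<dots> = c y\<^sub>0" using xy\<^sub>0 altsum_rho_at_rho by simp
  finally show ?thesis by (simp add: x_def)
qed

lemma gmult_altsum_rho_eq_0D:
  assumes "c \<in> grp_ring m" "gmult c (altsum m (rho m)) = (\<lambda>_. 0)"
  shows "c = (\<lambda>_. 0)"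
proof (rule ccontr)
  define S where "S = {y. c y \<noteq> 0}"
  define \<phi> where "\<phi> = inner_w m (rho m)"
  have fin: "finite S" using assms(1) by (simp add: grp_ring_def S_def)
  assume "c \<noteq> (\<lambda>_. 0)"
  hence "S \<noteq> {}" by (auto simp: S_def)
  hence "Max (\<phi> ` S) \<in> \<phi> ` S" using fin by (intro Max_in) auto
  then obtain y\<^sub>0 where y\<^sub>0: "y\<^sub>0 \<in> S" "\<phi> y\<^sub>0 = Max (\<phi> ` S)" by auto
  have top: "\<phi> y \<le> \<phi> y\<^sub>0" if "y \<in> S" for y
    using Max_ge[of "\<phi> ` S"] fin that y\<^sub>0(2) by simp
  have "c y\<^sub>0 = 0"
    using gmult_altsum_rho_at_top[of c y\<^sub>0 m] fin y\<^sub>0(1) top assms(2) by (simp add: S_def \<phi>_def)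
  thus False using y\<^sub>0(1) by (simp add: S_def)
qed

lemma altsum_eq_0_if_equal_entries:
  assumes "j \<in> {1..m}" "k \<in> {1..m}" "j \<noteq> k" "\<nu> j = \<nu> k"
  shows "altsum m \<nu> x = 0"
proof -
  define t where "t = Transposition.transpose j k"
  define f where "f = (\<lambda>w::(nat\<Rightarrow>nat)\<times>(nat\<Rightarrow>int). (t \<circ> fst w, snd w))"
  define T where "T = {w\<in>weyl m. wact w \<nu> = x}"
  have t: "t permutes {1..m}" using assms by (simp add: t_def permutes_swap_id)
  have \<nu>t: "\<nu> (t n) = \<nu> n" for n using assms(4) by (auto simp: t_def transpose_def)
  have "t \<circ> t = id" by (simp add: t_def fun_eq_iff)
  hence f_invol: "f (f w) = w" for w by (simp add: f_def o_assoc)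
  have "f w \<in> T" if "w \<in> T" for w
    using that t by (auto simp: T_def weyl_def f_def wact_def permutes_compose \<nu>t)
  hence bij: "bij_betw f T T" by (intro bij_betwI[where g = f]) (auto simp: f_invol)
  have sign_f: "wsgn m (f w) = - wsgn m w" if "w \<in> T" for w
  proof -
    have "permutation (fst w)" "permutation t"
      using that t by (auto simp: T_def weyl_def intro: permutes_imp_permutation[OF finite_atLeastAtMost])
    hence "sign (t \<circ> fst w) = - sign (fst w)"
      using assms(3) by (simp add: sign_compose t_def sign_swap_id)
    thus ?thesis by (simp add: wsgn_def f_def)
  qed
  have "sum (wsgn m) T = sum (wsgn m \<circ> f) T"
    using sum.reindex_bij_betw[OF bij, of "wsgn m"] by simp
  also have "\<dots> = - sum (wsgn m) T" using sign_f by (simp add: sum_negf)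
  finally show ?thesis by (simp add: altsum_def T_def)
qed

lemma weyl_char_eq_0_if_equal_entries:
  assumes "j \<in> {1..m}" "k \<in> {1..m}" "j \<noteq> k" "addv \<mu> (rho m) j = addv \<mu> (rho m) k"
  shows "weyl_char m \<mu> = (\<lambda>_. 0)"
  unfolding weyl_char_def
proof (rule the_equality)
  show "(\<lambda>_. 0) \<in> grp_ring m \<and> gmult (\<lambda>_. 0) (altsum m (rho m)) = altsum m (addv \<mu> (rho m))"
    using altsum_eq_0_if_equal_entries[OF assms] by (auto simp: grp_ring_def gmult_def)
next
  fix c assume "c \<in> grp_ring m \<and> gmult c (altsum m (rho m)) = altsum m (addv \<mu> (rho m))"
  thus "c = (\<lambda>_. 0)"
    using altsum_eq_0_if_equal_entries[OF assms] gmult_altsum_rho_eq_0D by (metis ext)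
qed

theorem lemma2p1:
  fixes p m i j :: nat and lam :: "nat \<Rightarrow> int" and a l :: int
  assumes "prime p" and "p > 2" and "m \<ge> 1"
    and "p_core p m lam"
    and "1 \<le> i" and "i < j" and "j \<le> m"
    and "coroot_pair m (addv lam (rho m)) (subv (eps i) (eps j)) = a + l * int p"
    and "a > 0" and "l > 0"
  shows "weyl_char m (dot m (s_aff p m (subv (eps i) (eps j)) l) lam) = (\<lambda>_. 0)"
proof -
  define \<nu> where "\<nu> = addv lam (rho m)"
  have i: "i \<in> {1..m}" and j: "j \<in> {1..m}" using assms(5-7) by auto
  have gap: "\<nu> i - \<nu> j = a + l * int p"
    using assms(6,8) coroot_pair_eps_diff[OF i j] by (simp add: \<nu>_def)
  have "0 \<le> lam j" using assms(4) j by (simp add: p_core_def dominant_def)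
  hence "\<nu> i - l * int p > 0" using gap assms(9) rho_pos[OF j] by (simp add: \<nu>_def addv_def)
  moreover have "l \<ge> 1" using assms(10) by simp
  ultimately obtain k where k: "k \<in> {1..m}" "\<nu> k = \<nu> i - l * int p"
    using assms(4) i unfolding p_core_def \<nu>_def by blast
  have "k \<noteq> j" "k \<noteq> i" using k gap assms(2,9,10) by auto
  define \<mu> where "\<mu> = dot m (s_aff p m (subv (eps i) (eps j)) l) lam"
  have "addv \<mu> (rho m) n = \<nu> n - a * subv (eps i) (eps j) n" for n
    using assms(8) by (simp add: \<mu>_def addv_dot_rho s_aff_def \<nu>_def)
  hence "addv \<mu> (rho m) j = addv \<mu> (rho m) k"
    using k gap \<open>k \<noteq> j\<close> \<open>k \<noteq> i\<close> assms(6) by (simp add: subv_def eps_def)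
  thus ?thesis using weyl_char_eq_0_if_equal_entries[OF j k(1)] \<open>k \<noteq> j\<close> by (simp add: \<mu>_def)
qed

end
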